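(* Let $p$ be a prime, $R=\mathbb{F}_p[x,x^{-1}]$, $n\ge1$, let $U$ be an additive subgroup of $R^n$, and let $(f_m)_{m\ge1}$ be an enumeration of the irreducible elements of $\mathbb{F}_p[x]$. Then $U_m=f_mU\to\{0\}$.
   Context: Convergence of subsets $U_m\to\{0\}$ of $R^n$ means that for every $v\in R^n$, the truth value of $v\in U_m$ is eventually equal to that of $v\in\{0\}$ (the topology induced from $\{0,1\}^{R^n}$). *)

theory Defs
  imports "HOL-Analysis.Analysis" "HOL-Computational_Algebra.Polynomial_FPS"
    "HOL-Computational_Algebra.Formal_Laurent_Series"
begin

text \<open>Laurent polynomials k[x,x^-1], realised inside the formal Laurent series as
  those with finitely many nonzero coefficients (the support is already bounded below).\<close>
definition laurent_polys :: "'k::zero fls set" where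
  "laurent_polys = {f. \<exists>N::int. \<forall>m\<ge>N. fls_nth f m = 0}"

definition laurent_vecs :: "('k::zero fls ^ 'n) set" where
  "laurent_vecs = {v. \<forall>i. v $ i \<in> laurent_polys}"

definition poly_to_laurent :: "'k::comm_ring_1 poly \<Rightarrow> 'k fls" where
  "poly_to_laurent q = fps_to_fls (fps_of_poly q)"

definition additive_subgroup :: "'a::ab_group_add set \<Rightarrow> bool" where
  "additive_subgroup U \<longleftrightarrow> 0 \<in> U \<and> (\<forall>a\<in>U. \<forall>b\<in>U. a + b \<in> U) \<and> (\<forall>a\<in>U. - a \<in> U)"

definition scale_set :: "'k::comm_ring_1 fls \<Rightarrow> ('k fls ^ 'n) set \<Rightarrow> ('k fls ^ 'n) set" where
  "scale_set c U = (\<lambda>u. \<chi> i. c * u $ i) ` U"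

end

theory Submission
  imports Defs
begin

text \<open>A nonzero vector v has a nonzero coordinate w, and w = x^k \<cdot> P with P a polynomial
  such that P(0) \<noteq> 0. If w = f u with f irreducible and u a Laurent polynomial, then
  either f is associated to x, or f divides P in k[x]; in both cases deg f \<le> max (deg P) 1.
  Since k is finite, only finitely many polynomials have bounded degree, so an enumeration
  of the irreducible polynomials eventually has larger degree and v \<notin> f_m U.\<close>

lemma finite_degree_le_poly: "finite {q :: 'a::{zero,finite} poly. degree q \<le> d}"
proof (rule finite_subset)
  show "{q :: 'a poly. degree q \<le> d} \<subseteq> Poly ` {xs. length xs \<le> Suc d}"
  proof
    fix q :: "'a poly" assume "q \<in> {q. degree q \<le> d}"
    then have "length (coeffs q) \<le> Suc d"
      by (cases "q = 0") (simp_all add: length_coeffs_degree)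
    then show "q \<in> Poly ` {xs. length xs \<le> Suc d}"
      by (metis Poly_coeffs image_eqI mem_Collect_eq)
  qed
qed (intro finite_imageI, use finite_lists_length_le[OF finite_class.finite_UNIV, of "Suc d"] in simp)

lemma eventually_degree_gt_inj:
  fixes f :: "nat \<Rightarrow> 'a::{zero,finite} poly"
  assumes "inj_on f {1..}"
  shows "\<forall>\<^sub>F m in sequentially. d < degree (f m)"
proof -
  let ?M = "{m \<in> {1..}. degree (f m) \<le> d}"
  have "finite ?M"
  proof (rule finite_imageD)
    show "finite (f ` ?M)"
      by (rule finite_subset[OF _ finite_degree_le_poly[of d]]) auto
    show "inj_on f ?M"
      using assms by (rule inj_on_subset) auto
  qed
  moreover have "{m. \<not> d < degree (f m)} \<subseteq> insert 0 ?M"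
    by auto
  ultimately have "finite {m. \<not> d < degree (f m)}"
    by (meson finite_insert finite_subset)
  then show ?thesis
    by (simp flip: cofinite_eq_sequentially add: eventually_cofinite)
qed

lemma laurent_polys_base_factor_poly:
  fixes w :: "'k::field fls"
  assumes "w \<in> laurent_polys"
  obtains p where "fls_base_factor_to_fps w = fps_of_poly p"
proof -
  from assms obtain M where M: "\<forall>m\<ge>M. fls_nth w m = 0"
    unfolding laurent_polys_def by auto
  define N where "N = nat (M - fls_subdegree w)"
  define p where "p = Abs_poly (\<lambda>i. if i \<le> N then fls_base_factor_to_fps w $ i else 0)"
  have "fls_base_factor_to_fps w = fps_of_poly p"
  proof (rule fps_ext)
    fix n
    show "fls_base_factor_to_fps w $ n = fps_of_poly p $ n"
    proof (cases "n \<le> N")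
      case True
      then show ?thesis by (simp add: p_def coeff_Abs_poly_If_le)
    next
      case False
      then have "fls_nth w (fls_subdegree w + int n) = 0"
        using M unfolding N_def by simp
      with False show ?thesis
        by (simp add: p_def coeff_Abs_poly_If_le fls_base_factor_to_fps_nth add.commute)
    qed
  qed
  then show ?thesis by (rule that)
qed

lemma fls_base_factor_poly_to_laurent:
  fixes q :: "'k::field poly"
  assumes "coeff q 0 \<noteq> 0"
  shows "fls_base_factor_to_fps (poly_to_laurent q) = fps_of_poly q"
proof -
  have "subdegree (fps_of_poly q) = 0"
    using assms by (simp add: subdegree_eq_0_iff)
  then show ?thesis
    unfolding poly_to_laurent_def
    by (simp add: fls_base_factor_to_fps_to_fls fps_unit_factor_def fls_subdegree_fls_to_fps)
qed

lemma dvd_base_factor_laurent_mult: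
  fixes q p :: "'k::field poly" and u :: "'k fls"
  assumes "coeff q 0 \<noteq> 0" "u \<in> laurent_polys"
    and "fls_base_factor_to_fps (poly_to_laurent q * u) = fps_of_poly p"
  shows "q dvd p"
proof -
  obtain r where r: "fls_base_factor_to_fps u = fps_of_poly r"
    using laurent_polys_base_factor_poly[OF assms(2)] .
  have "fls_base_factor_to_fps (poly_to_laurent q * u)
      = fls_base_factor_to_fps (poly_to_laurent q) * fls_base_factor_to_fps u"
    by (rule fls_base_factor_to_fps_mult)
  then have "fps_of_poly p = fps_of_poly (q * r)"
    unfolding assms(3) r fls_base_factor_poly_to_laurent[OF assms(1)] fps_of_poly_mult .
  then show ?thesis by (simp add: fps_of_poly_eq_iff)
qed

lemma irreducible_coeff_0_eq_0_degree:
  fixes q :: "'k::field poly"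
  assumes "irreducible q" "coeff q 0 = 0"
  shows "degree q = 1"
proof -
  from assms(2) have "[:0, 1:] dvd q"
    by (simp add: dvd_iff_poly_eq_0 poly_0_coeff_0)
  then obtain r where r: "q = [:0, 1:] * r" ..
  have "\<not> is_unit ([:0, 1:] :: 'k poly)"
    by (simp add: is_unit_iff_degree)
  then have "is_unit r"
    using irreducibleD[OF assms(1) r] by blast
  then have "r \<noteq> 0" by auto
  with \<open>is_unit r\<close> have "degree r = 0"
    by (simp add: is_unit_iff_degree)
  with r \<open>r \<noteq> 0\<close> show ?thesis by (simp add: degree_mult_eq)
qed

lemma irreducible_degree_le_if_laurent_factor:
  fixes q p :: "'k::field poly" and w u :: "'k fls"
  assumes "irreducible q" "w \<noteq> 0" "u \<in> laurent_polys"
    and "w = poly_to_laurent q * u"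
    and "fls_base_factor_to_fps w = fps_of_poly p"
  shows "degree q \<le> max (degree p) 1"
proof (cases "coeff q 0 = 0")
  case True
  then show ?thesis
    using irreducible_coeff_0_eq_0_degree[OF assms(1)] by simp
next
  case False
  have "p \<noteq> 0"
    using assms(2,5) fls_base_factor_to_fps_nonzero[of w] by auto
  moreover have "q dvd p"
    using dvd_base_factor_laurent_mult[OF False assms(3)] assms(4,5) by simp
  ultimately show ?thesis
    using dvd_imp_degree_le by fastforce
qed

lemma zero_in_scale_set:
  assumes "additive_subgroup U"
  shows "0 \<in> scale_set c U"
proof -
  have "0 \<in> U" using assms unfolding additive_subgroup_def by blast
  then show ?thesis unfolding scale_set_def by (force simp: vec_eq_iff)
qed

lemma irreducible_scale_set_degree_bounded:
  fixes v :: "'k::field fls ^ 'n"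
  assumes "v \<in> laurent_vecs" "v \<noteq> 0" "U \<subseteq> laurent_vecs"
  obtains d where "\<And>q. irreducible q \<Longrightarrow> v \<in> scale_set (poly_to_laurent q) U \<Longrightarrow> degree q \<le> d"
proof -
  from assms(2) obtain i where i: "v $ i \<noteq> 0" by (auto simp: vec_eq_iff)
  from assms(1) have "v $ i \<in> laurent_polys" unfolding laurent_vecs_def by blast
  then obtain p where p: "fls_base_factor_to_fps (v $ i) = fps_of_poly p"
    by (rule laurent_polys_base_factor_poly)
  have "degree q \<le> max (degree p) 1"
    if q: "irreducible q" and v: "v \<in> scale_set (poly_to_laurent q) U" for q
  proof -
    from v obtain u where u: "u \<in> U" "v = (\<chi> j. poly_to_laurent q * u $ j)"
      unfolding scale_set_def by blast
    have "u $ i \<in> laurent_polys"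
      using u(1) assms(3) unfolding laurent_vecs_def by auto
    then show ?thesis
      using irreducible_degree_le_if_laurent_factor[OF q i _ _ p] u(2) by simp
  qed
  then show ?thesis by (rule that)
qed

theorem lemma6p16:
  fixes U :: "('k::{field,finite} fls ^ 'n) set"
    and f :: "nat \<Rightarrow> 'k poly"
  assumes "prime CARD('k)"
    and "U \<subseteq> laurent_vecs"
    and "additive_subgroup U"
    and "bij_betw f {1..} {q. irreducible q}"
  shows "\<forall>v\<in>laurent_vecs.
           \<forall>\<^sub>F m in sequentially. (v \<in> scale_set (poly_to_laurent (f m)) U \<longleftrightarrow> v = 0)"
proof
  fix v :: "'k fls ^ 'n" assume v: "v \<in> laurent_vecs"
  show "\<forall>\<^sub>F m in sequentially. (v \<in> scale_set (poly_to_laurent (f m)) U \<longleftrightarrow> v = 0)"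
  proof (cases "v = 0")
    case True
    then show ?thesis using zero_in_scale_set[OF assms(3)] by simp
  next
    case False
    obtain d where d: "\<And>q. irreducible q \<Longrightarrow> v \<in> scale_set (poly_to_laurent q) U \<Longrightarrow> degree q \<le> d"
      using irreducible_scale_set_degree_bounded[OF v False assms(2)] by blast
    have inj: "inj_on f {1..}" and irr: "\<And>m. m \<ge> 1 \<Longrightarrow> irreducible (f m)"
      using assms(4) by (auto simp: bij_betw_def)
    have "\<forall>\<^sub>F m in sequentially. m \<ge> 1 \<and> d < degree (f m)"
      using inj by (intro eventually_conj eventually_ge_at_top eventually_degree_gt_inj)
    then show ?thesis
      by (rule eventually_mono) (use False d irr in fastforce)
  qed
qed

end
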